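(* Fix finite nonempty $A$, $\Omega$, a full-support prior $\mu_0$ on $\Omega$, and a finite $M$ with $|M|>\max\{|\Omega|,|A|\}$. There is a set of transparent environments of Lebesgue measure one in $[0,1]^{|A|(|\Omega|+1)}$ such that, for every environment in it, commitment is valuable if and only if committed Sender values randomization.
   Context: An environment $(u_S,u_R)$ with $u_S,u_R:A\times\Omega\to[0,1]$ is transparent if there is $v:A\to[0,1]$ with $u_S(a,\omega)=v(a)$ for all $a,\omega$; the set of transparent environments is identified with $[0,1]^{|A|(|\Omega|+1)}$ (coordinates $v$ and $u_R$). Messaging strategies $\sigma:\Omega\to\Delta M$, action strategies $\rho:M\to\Delta A$, $U_i(\sigma,\rho)=\sum_{\omega,m,a}\mu_0(\omega)\sigma(m|\omega)\rho(a|m)u_i(a,\omega)$. $(\sigma,\rho)$ is S-BR if $\sigma\in\arg\max_{\sigma'}U_S(\sigma',\rho)$ and R-BR if $\rho\in\arg\max_{\rho'}U_R(\sigma,\rho')$. Persuasion payoff: max of $U_S$ over R-BR profiles; cheap-talk payoff: max over profiles that are S-BR and R-BR. Commitment is valuable if persuasion payoff > cheap-talk payoff. $\sigma$ is partitional if for every $\omega$ some $m$ has $\sigma(m|\omega)=1$. Partitional persuasion payoff: max of $U_S$ over R-BR profiles with partitional $\sigma$. Committed Sender values randomization if persuasion payoff > partitional persuasion payoff. *)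

theory Defs
  imports "HOL-Analysis.Analysis"
begin

text \<open>A mixed strategy is a probability vector; messaging strategies sigma :: 'w => 'm => real
  (sigma w m = probability of m in state w), action strategies rho :: 'm => 'a => real.\<close>

definition is_distr :: "('b::finite \<Rightarrow> real) \<Rightarrow> bool" where
  "is_distr p \<longleftrightarrow> (\<forall>x. 0 \<le> p x) \<and> sum p UNIV = 1"

definition msg_strat :: "('w::finite \<Rightarrow> 'm::finite \<Rightarrow> real) \<Rightarrow> bool" where
  "msg_strat \<sigma> \<longleftrightarrow> (\<forall>w. is_distr (\<sigma> w))"

definition act_strat :: "('m::finite \<Rightarrow> 'a::finite \<Rightarrow> real) \<Rightarrow> bool" where
  "act_strat \<rho> \<longleftrightarrow> (\<forall>m. is_distr (\<rho> m))"

definition payoff ::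
  "('w::finite \<Rightarrow> real) \<Rightarrow> ('a::finite \<Rightarrow> 'w \<Rightarrow> real)
     \<Rightarrow> ('w \<Rightarrow> 'm::finite \<Rightarrow> real) \<Rightarrow> ('m \<Rightarrow> 'a \<Rightarrow> real) \<Rightarrow> real" where
  "payoff mu u \<sigma> \<rho> = (\<Sum>w\<in>UNIV. \<Sum>m\<in>UNIV. \<Sum>a\<in>UNIV. mu w * \<sigma> w m * \<rho> m a * u a w)"

definition S_BR ::
  "('w::finite \<Rightarrow> real) \<Rightarrow> ('a::finite \<Rightarrow> 'w \<Rightarrow> real)
     \<Rightarrow> ('w \<Rightarrow> 'm::finite \<Rightarrow> real) \<Rightarrow> ('m \<Rightarrow> 'a \<Rightarrow> real) \<Rightarrow> bool" where
  "S_BR mu uS \<sigma> \<rho> \<longleftrightarrow> (\<forall>\<sigma>'. msg_strat \<sigma>' \<longrightarrow> payoff mu uS \<sigma>' \<rho> \<le> payoff mu uS \<sigma> \<rho>)"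

definition R_BR ::
  "('w::finite \<Rightarrow> real) \<Rightarrow> ('a::finite \<Rightarrow> 'w \<Rightarrow> real)
     \<Rightarrow> ('w \<Rightarrow> 'm::finite \<Rightarrow> real) \<Rightarrow> ('m \<Rightarrow> 'a \<Rightarrow> real) \<Rightarrow> bool" where
  "R_BR mu uR \<sigma> \<rho> \<longleftrightarrow> (\<forall>\<rho>'. act_strat \<rho>' \<longrightarrow> payoff mu uR \<sigma> \<rho>' \<le> payoff mu uR \<sigma> \<rho>)"

definition partitional :: "('w::finite \<Rightarrow> 'm::finite \<Rightarrow> real) \<Rightarrow> bool" where
  "partitional \<sigma> \<longleftrightarrow> (\<forall>w. \<exists>m. \<sigma> w m = 1)"

text \<open>The payoffs below are maxima; we write them as suprema (the sets are nonempty,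
  bounded and the maxima are attained).\<close>

definition persuasion_payoff ::
  "('w::finite \<Rightarrow> real) \<Rightarrow> ('a::finite \<Rightarrow> 'w \<Rightarrow> real) \<Rightarrow> ('a \<Rightarrow> 'w \<Rightarrow> real)
     \<Rightarrow> 'm::finite itself \<Rightarrow> real" where
  "persuasion_payoff mu uS uR (_::'m itself) =
     Sup {payoff mu uS \<sigma> \<rho> | (\<sigma> :: 'w \<Rightarrow> 'm \<Rightarrow> real) \<rho>.
            msg_strat \<sigma> \<and> act_strat \<rho> \<and> R_BR mu uR \<sigma> \<rho>}"

definition cheap_talk_payoff ::
  "('w::finite \<Rightarrow> real) \<Rightarrow> ('a::finite \<Rightarrow> 'w \<Rightarrow> real) \<Rightarrow> ('a \<Rightarrow> 'w \<Rightarrow> real)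
     \<Rightarrow> 'm::finite itself \<Rightarrow> real" where
  "cheap_talk_payoff mu uS uR (_::'m itself) =
     Sup {payoff mu uS \<sigma> \<rho> | (\<sigma> :: 'w \<Rightarrow> 'm \<Rightarrow> real) \<rho>.
            msg_strat \<sigma> \<and> act_strat \<rho> \<and> S_BR mu uS \<sigma> \<rho> \<and> R_BR mu uR \<sigma> \<rho>}"

definition partitional_persuasion_payoff ::
  "('w::finite \<Rightarrow> real) \<Rightarrow> ('a::finite \<Rightarrow> 'w \<Rightarrow> real) \<Rightarrow> ('a \<Rightarrow> 'w \<Rightarrow> real)
     \<Rightarrow> 'm::finite itself \<Rightarrow> real" where
  "partitional_persuasion_payoff mu uS uR (_::'m itself) =
     Sup {payoff mu uS \<sigma> \<rho> | (\<sigma> :: 'w \<Rightarrow> 'm \<Rightarrow> real) \<rho>.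
            msg_strat \<sigma> \<and> partitional \<sigma> \<and> act_strat \<rho> \<and> R_BR mu uR \<sigma> \<rho>}"

definition commitment_valuable where
  "commitment_valuable mu uS uR M \<longleftrightarrow>
     persuasion_payoff mu uS uR M > cheap_talk_payoff mu uS uR M"

definition values_randomization where
  "values_randomization mu uS uR M \<longleftrightarrow>
     persuasion_payoff mu uS uR M > partitional_persuasion_payoff mu uS uR M"

text \<open>Transparent environments as points of [0,1]^(|A|(|Omega|+1)):
  coordinates indexed by 'a + ('a \<times> 'w); Inl a gives v(a), Inr (a,w) gives u_R(a,w).\<close>

definition env_uS :: "real ^ ('a::finite + ('a \<times> 'w::finite)) \<Rightarrow> 'a \<Rightarrow> 'w \<Rightarrow> real" where
  "env_uS e a w = e $ Inl a"

definition env_uR :: "real ^ ('a::finite + ('a \<times> 'w::finite)) \<Rightarrow> 'a \<Rightarrow> 'w \<Rightarrow> real" where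
  "env_uR e a w = e $ Inr (a, w)"

definition unit_cube :: "(real ^ 'n::finite) set" where
  "unit_cube = {x. \<forall>i. 0 \<le> x $ i \<and> x $ i \<le> 1}"

end

(*
  Fix a generic transparent environment: the values v of Sender's actions are pairwise distinct,
  and on no nonempty set of states is Receiver indifferent between two actions under the prior.
  Write P, C and Q for the persuasion, cheap-talk and partitional persuasion payoffs. There are
  d, d' > 0 with C <= max Q (P - d) and Q <= max C (P - d'), so P > C exactly when P > Q.

  First bound: in a cheap-talk equilibrium every message that is sent yields the equilibrium
  payoff c, so c <= v a, where a is the worst action among Receiver's Sender-preferred best replies
  to sent messages. If the messages inducing other actions are improbable, a is optimal under the
  prior and babbling on a yields v a >= c with a partitional strategy; otherwise replying in Sender's
  favour gains at least the value gap times their probability.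

  Second bound: let Receiver reply in Sender's favour to a partitional strategy. If all cells
  induce actions of equal value, this is a cheap-talk equilibrium. Otherwise, sending the message
  of a better cell with small probability t in a worse cell keeps the reply optimal, because
  genericity gives Receiver a strict margin in the better cell, and Sender gains.

  The environments violating genericity lie on finitely many hyperplanes.
*)
theory Submission
  imports Defs
begin

definition point_mass :: "'b \<Rightarrow> 'b \<Rightarrow> real" where
  "point_mass y x = (if x = y then 1 else 0)"

text \<open>Receiver's expected utility of an action after a message, not normalised by the
  probability of the message.\<close>

definition interim_util ::
  "('w::finite \<Rightarrow> real) \<Rightarrow> ('a \<Rightarrow> 'w \<Rightarrow> real) \<Rightarrow> ('w \<Rightarrow> 'm \<Rightarrow> real) \<Rightarrow> 'm \<Rightarrow> 'a \<Rightarrow> real" where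
  "interim_util mu u \<sigma> m a = (\<Sum>w\<in>UNIV. mu w * \<sigma> w m * u a w)"

definition msg_prob :: "('w::finite \<Rightarrow> real) \<Rightarrow> ('w \<Rightarrow> 'm \<Rightarrow> real) \<Rightarrow> 'm \<Rightarrow> real" where
  "msg_prob mu \<sigma> m = (\<Sum>w\<in>UNIV. mu w * \<sigma> w m)"

definition msg_value :: "('a::finite \<Rightarrow> real) \<Rightarrow> ('m \<Rightarrow> 'a \<Rightarrow> real) \<Rightarrow> 'm \<Rightarrow> real" where
  "msg_value v \<rho> m = (\<Sum>a\<in>UNIV. \<rho> m a * v a)"

definition prior_util :: "('w::finite \<Rightarrow> real) \<Rightarrow> ('a \<Rightarrow> 'w \<Rightarrow> real) \<Rightarrow> 'a \<Rightarrow> real" where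
  "prior_util mu u a = (\<Sum>w\<in>UNIV. mu w * u a w)"

lemma is_distr_point_mass: "is_distr (point_mass (y::'b::finite))"
  by (simp add: is_distr_def point_mass_def)

lemma sum_point_mass [simp]: "(\<Sum>x\<in>UNIV. point_mass (y::'b::finite) x * f x) = f y"
  by (simp add: point_mass_def if_distrib[where f="\<lambda>c. c * _"] cong: if_cong)

lemma sum_point_mass_UNIV [simp]: "(\<Sum>x\<in>UNIV. point_mass (y::'b::finite) x) = 1"
  using is_distr_point_mass[of y] by (simp add: is_distr_def)

lemma convex_comb_le:
  assumes p: "is_distr p" and le: "\<And>x. p x > 0 \<Longrightarrow> f x \<le> B"
  shows "(\<Sum>x\<in>UNIV. p x * f x) \<le> B"
proof -
  have "p x * f x \<le> p x * B" for x
  proof (cases "p x > 0")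
    case True
    then show ?thesis
      using le[of x] by (simp add: mult_left_mono)
  next
    case False
    then have "p x = 0"
      using p unfolding is_distr_def by (meson antisym not_le)
    then show ?thesis
      by simp
  qed
  then have "(\<Sum>x\<in>UNIV. p x * f x) \<le> (\<Sum>x\<in>UNIV. p x * B)"
    by (rule sum_mono)
  also have "\<dots> = B"
    using p by (simp add: is_distr_def flip: sum_distrib_right)
  finally show ?thesis .
qed

lemma convex_comb_ge:
  assumes "is_distr p" "\<And>x. p x > 0 \<Longrightarrow> B \<le> f x"
  shows "B \<le> (\<Sum>x\<in>UNIV. p x * f x)"
  using convex_comb_le[of p "\<lambda>x. - f x" "- B"] assms by (simp add: sum_negf)

lemma convex_comb_eq:
  assumes "is_distr p" "\<And>x. p x > 0 \<Longrightarrow> f x = B"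
  shows "(\<Sum>x\<in>UNIV. p x * f x) = B"
  using convex_comb_le[of p f B] convex_comb_ge[of p B f] assms by force

lemma convex_comb_less:
  assumes p: "is_distr p" and le: "\<And>x. f x \<le> B" and "p x0 > 0" "f x0 < B"
  shows "(\<Sum>x\<in>UNIV. p x * f x) < B"
proof -
  have "(\<Sum>x\<in>UNIV. p x * f x) < (\<Sum>x\<in>UNIV. p x * B)"
  proof (rule sum_strict_mono_ex1)
    show "\<forall>x\<in>UNIV. p x * f x \<le> p x * B"
      using p le by (simp add: is_distr_def mult_left_mono)
    show "\<exists>x\<in>UNIV. p x * f x < p x * B"
      using assms(3,4) mult_strict_left_mono by blast
  qed simp
  also have "\<dots> = B"
    using p by (simp add: is_distr_def flip: sum_distrib_right)
  finally show ?thesis .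
qed

lemma finite_pos_lower_bound:
  assumes "finite S" "\<And>x. x \<in> S \<Longrightarrow> 0 < f x"
  obtains \<delta> :: real where "0 < \<delta>" "\<And>x. x \<in> S \<Longrightarrow> \<delta> \<le> f x"
proof
  show "0 < Min (insert 1 (f ` S))"
    using assms by (subst Min_gr_iff) auto
  show "Min (insert 1 (f ` S)) \<le> f x" if "x \<in> S" for x
    using assms(1) that by (intro Min_le) auto
qed

lemma ex_max_finite:
  fixes f :: "'b \<Rightarrow> real"
  assumes "finite S" "S \<noteq> {}"
  obtains x where "x \<in> S" "\<And>y. y \<in> S \<Longrightarrow> f y \<le> f x"
proof -
  have "Max (f ` S) \<in> f ` S"
    using assms by simp
  then obtain x where "x \<in> S" "f x = Max (f ` S)"
    by (metis imageE)
  then show ?thesis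
    using that assms by (metis Max_ge finite_imageI imageI)
qed

lemma ex_sender_preferred_reply:
  fixes g :: "'m \<Rightarrow> 'a::finite \<Rightarrow> real" and v :: "'a \<Rightarrow> real"
  obtains am where "\<And>m b. g m b \<le> g m (am m)"
    and "\<And>m a. \<forall>b. g m b \<le> g m a \<Longrightarrow> v a \<le> v (am m)"
proof -
  have "\<exists>x. (\<forall>b. g m b \<le> g m x) \<and> (\<forall>a. (\<forall>b. g m b \<le> g m a) \<longrightarrow> v a \<le> v x)" for m
  proof -
    obtain a0 where "\<And>b. g m b \<le> g m a0"
      using ex_max_finite[of UNIV "g m"] by auto
    then have "{a. \<forall>b. g m b \<le> g m a} \<noteq> {}"
      by auto
    then obtain x where "x \<in> {a. \<forall>b. g m b \<le> g m a}" "\<And>a. a \<in> {a. \<forall>b. g m b \<le> g m a} \<Longrightarrow> v a \<le> v x"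
      using ex_max_finite[of "{a. \<forall>b. g m b \<le> g m a}" v] by auto
    then show ?thesis
      by blast
  qed
  then show ?thesis
    using that by metis
qed

lemma payoff_interim_util:
  "payoff mu u \<sigma> \<rho> = (\<Sum>m\<in>UNIV. \<Sum>a\<in>UNIV. \<rho> m a * interim_util mu u \<sigma> m a)"
proof -
  have "(\<Sum>m\<in>UNIV. \<Sum>a\<in>UNIV. \<rho> m a * interim_util mu u \<sigma> m a)
      = (\<Sum>m\<in>UNIV. \<Sum>a\<in>UNIV. \<Sum>w\<in>UNIV. mu w * \<sigma> w m * \<rho> m a * u a w)"
    by (simp add: interim_util_def sum_distrib_left mult_ac)
  also have "\<dots> = (\<Sum>m\<in>UNIV. \<Sum>w\<in>UNIV. \<Sum>a\<in>UNIV. mu w * \<sigma> w m * \<rho> m a * u a w)"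
    by (rule sum.cong[OF refl], rule sum.swap)
  also have "\<dots> = payoff mu u \<sigma> \<rho>"
    unfolding payoff_def by (rule sum.swap)
  finally show ?thesis
    by simp
qed

lemma payoff_transparent:
  "payoff mu (\<lambda>a w. v a) \<sigma> \<rho> = (\<Sum>w\<in>UNIV. mu w * (\<Sum>m\<in>UNIV. \<sigma> w m * msg_value v \<rho> m))"
  by (simp add: payoff_def msg_value_def sum_distrib_left mult_ac)

lemma payoff_transparent_msg_prob:
  "payoff mu (\<lambda>a w. v a) \<sigma> \<rho> = (\<Sum>m\<in>UNIV. msg_prob mu \<sigma> m * msg_value v \<rho> m)"
proof -
  have "payoff mu (\<lambda>a w. v a) \<sigma> \<rho> = (\<Sum>w\<in>UNIV. \<Sum>m\<in>UNIV. mu w * \<sigma> w m * msg_value v \<rho> m)"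
    by (simp add: payoff_transparent sum_distrib_left mult_ac)
  also have "\<dots> = (\<Sum>m\<in>UNIV. \<Sum>w\<in>UNIV. mu w * \<sigma> w m * msg_value v \<rho> m)"
    by (rule sum.swap)
  finally show ?thesis
    by (simp add: msg_prob_def sum_distrib_right)
qed

lemma payoff_le:
  assumes mu: "is_distr mu" and \<sigma>: "msg_strat \<sigma>" and \<rho>: "act_strat \<rho>" and u: "\<And>a w. u a w \<le> B"
  shows "payoff mu u \<sigma> \<rho> \<le> B"
proof -
  have "payoff mu u \<sigma> \<rho> = (\<Sum>w\<in>UNIV. mu w * (\<Sum>m\<in>UNIV. \<sigma> w m * (\<Sum>a\<in>UNIV. \<rho> m a * u a w)))"
    by (simp add: payoff_def sum_distrib_left mult_ac)
  also have "\<dots> \<le> B"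
    using \<sigma> \<rho> u unfolding msg_strat_def act_strat_def
    by (intro convex_comb_le[OF mu]) (simp add: convex_comb_le)
  finally show ?thesis .
qed

lemma payoff_msg_value_const:
  assumes mu: "is_distr mu" and \<sigma>: "msg_strat \<sigma>" and const: "\<And>m. msg_value v \<rho> m = c"
  shows "payoff mu (\<lambda>a w. v a) \<sigma> \<rho> = c"
  unfolding payoff_transparent using \<sigma> const unfolding msg_strat_def
  by (intro convex_comb_eq[OF mu]) (simp add: convex_comb_eq)

lemma msg_prob_nonneg:
  "is_distr mu \<Longrightarrow> msg_strat \<sigma> \<Longrightarrow> 0 \<le> msg_prob mu \<sigma> m"
  unfolding msg_prob_def msg_strat_def is_distr_def by (simp add: sum_nonneg)

lemma sum_msg_prob:
  assumes mu: "is_distr mu" and \<sigma>: "msg_strat \<sigma>"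
  shows "(\<Sum>m\<in>UNIV. msg_prob mu \<sigma> m) = 1"
proof -
  have "(\<Sum>m\<in>UNIV. msg_prob mu \<sigma> m) = (\<Sum>w\<in>UNIV. mu w * (\<Sum>m\<in>UNIV. \<sigma> w m))"
    unfolding msg_prob_def sum_distrib_left by (rule sum.swap)
  then show ?thesis
    using mu \<sigma> by (simp add: msg_strat_def is_distr_def)
qed

lemma msg_prob_le_1:
  assumes "is_distr mu" "msg_strat \<sigma>"
  shows "msg_prob mu \<sigma> m \<le> 1"
  using member_le_sum[of m UNIV "msg_prob mu \<sigma>"] msg_prob_nonneg[OF assms] sum_msg_prob[OF assms]
  by simp

lemma msg_prob_ge:
  assumes "is_distr mu" "msg_strat \<sigma>"
  shows "mu w * \<sigma> w m \<le> msg_prob mu \<sigma> m"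
  unfolding msg_prob_def using assms
  by (intro member_le_sum) (auto simp: msg_strat_def is_distr_def)

lemma sum_interim_util:
  assumes "msg_strat \<sigma>"
  shows "(\<Sum>m\<in>UNIV. interim_util mu u \<sigma> m a) = prior_util mu u a"
proof -
  have "(\<Sum>m\<in>UNIV. interim_util mu u \<sigma> m a) = (\<Sum>w\<in>UNIV. mu w * u a w * (\<Sum>m\<in>UNIV. \<sigma> w m))"
    unfolding interim_util_def sum_distrib_left by (subst sum.swap) (simp add: mult_ac)
  then show ?thesis
    using assms by (simp add: msg_strat_def is_distr_def prior_util_def)
qed

lemma interim_util_diff_ge:
  assumes mu: "is_distr mu" and \<sigma>: "msg_strat \<sigma>" and u: "\<forall>a w. 0 \<le> u a w \<and> u a w \<le> 1"
  shows "interim_util mu u \<sigma> m a - interim_util mu u \<sigma> m b \<ge> - msg_prob mu \<sigma> m"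
proof -
  have "mu w * \<sigma> w m * (-1) \<le> mu w * \<sigma> w m * (u a w - u b w)" for w
  proof (rule mult_left_mono)
    show "-1 \<le> u a w - u b w"
      using u by (smt (verit))
    show "0 \<le> mu w * \<sigma> w m"
      using mu \<sigma> by (simp add: msg_strat_def is_distr_def)
  qed
  then have "(\<Sum>w\<in>UNIV. mu w * \<sigma> w m * (-1)) \<le> (\<Sum>w\<in>UNIV. mu w * \<sigma> w m * (u a w - u b w))"
    by (rule sum_mono)
  then show ?thesis
    by (simp add: interim_util_def msg_prob_def sum_negf sum_subtractf algebra_simps)
qed

lemma R_BR_pure_reply:
  fixes \<sigma> :: "'w::finite \<Rightarrow> 'm::finite \<Rightarrow> real" and u :: "'a::finite \<Rightarrow> 'w \<Rightarrow> real"
  assumes "\<And>m b. interim_util mu u \<sigma> m b \<le> interim_util mu u \<sigma> m (am m)"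
  shows "R_BR mu u \<sigma> (\<lambda>m. point_mass (am m))"
  unfolding R_BR_def
proof (intro allI impI)
  fix \<rho> :: "'m \<Rightarrow> 'a \<Rightarrow> real"
  assume "act_strat \<rho>"
  then have "payoff mu u \<sigma> \<rho> \<le> (\<Sum>m\<in>UNIV. interim_util mu u \<sigma> m (am m))"
    unfolding payoff_interim_util act_strat_def using assms
    by (intro sum_mono convex_comb_le) auto
  then show "payoff mu u \<sigma> \<rho> \<le> payoff mu u \<sigma> (\<lambda>m. point_mass (am m))"
    by (simp add: payoff_interim_util)
qed

lemma act_strat_pure: "act_strat (\<lambda>m. point_mass (am m))"
  by (simp add: act_strat_def is_distr_point_mass)

lemma R_BR_support_optimal:
  assumes R: "R_BR mu u \<sigma> \<rho>" and \<rho>: "act_strat \<rho>" and pos: "\<rho> m a > 0"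
  shows "interim_util mu u \<sigma> m b \<le> interim_util mu u \<sigma> m a"
proof (rule ccontr)
  let ?g = "interim_util mu u \<sigma>"
  assume not_opt: "\<not> ?thesis"
  obtain best where best: "\<And>b. ?g m b \<le> ?g m best"
    using ex_max_finite[of UNIV "?g m"] by auto
  define \<rho>' where "\<rho>' = \<rho>(m := point_mass best)"
  have "act_strat \<rho>'"
    using \<rho> by (simp add: \<rho>'_def act_strat_def is_distr_point_mass)
  have "?g m a < ?g m best"
    using not_opt best[of b] by linarith
  then have "(\<Sum>a\<in>UNIV. \<rho> m a * ?g m a) < ?g m best"
    using \<rho> best pos unfolding act_strat_def by (intro convex_comb_less[of _ _ _ a]) auto
  moreover have "payoff mu u \<sigma> \<rho>' = payoff mu u \<sigma> \<rho> + (?g m best - (\<Sum>a\<in>UNIV. \<rho> m a * ?g m a))"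
  proof -
    have "(\<Sum>a\<in>UNIV. \<rho>' m' a * ?g m' a) = (\<Sum>a\<in>UNIV. \<rho> m' a * ?g m' a)
        + (if m' = m then ?g m best - (\<Sum>a\<in>UNIV. \<rho> m a * ?g m a) else 0)" for m'
      by (simp add: \<rho>'_def)
    then show ?thesis
      by (simp add: payoff_interim_util sum.distrib)
  qed
  moreover have "payoff mu u \<sigma> \<rho>' \<le> payoff mu u \<sigma> \<rho>"
    using R \<open>act_strat \<rho>'\<close> unfolding R_BR_def by blast
  ultimately show False
    by linarith
qed

lemma msg_value_le_preferred_reply:
  assumes R: "R_BR mu u \<sigma> \<rho>" and \<rho>: "act_strat \<rho>"
    and preferred: "\<And>a. \<forall>b. interim_util mu u \<sigma> m b \<le> interim_util mu u \<sigma> m a \<Longrightarrow> v a \<le> v (am m)"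
  shows "msg_value v \<rho> m \<le> v (am m)"
  unfolding msg_value_def using \<rho> R_BR_support_optimal[OF R \<rho>] preferred
  by (intro convex_comb_le) (auto simp: act_strat_def)

lemma S_BR_used_msg_value:
  assumes mu: "is_distr mu" and full: "\<forall>w. mu w > 0" and \<sigma>: "msg_strat \<sigma>"
    and S: "S_BR mu (\<lambda>a w. v a) \<sigma> \<rho>" and used: "\<sigma> w m > 0"
  shows "msg_value v \<rho> m = payoff mu (\<lambda>a w. v a) \<sigma> \<rho>"
proof -
  let ?V = "msg_value v \<rho>"
  obtain best where best: "\<And>m'. ?V m' \<le> ?V best"
    using ex_max_finite[of UNIV ?V] by auto
  have "payoff mu (\<lambda>a w. v a) (\<lambda>w. point_mass best) \<rho> = ?V best"
    unfolding payoff_transparent by (simp add: convex_comb_eq[OF mu])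
  then have ge: "?V best \<le> payoff mu (\<lambda>a w. v a) \<sigma> \<rho>"
    using S is_distr_point_mass unfolding S_BR_def msg_strat_def by metis
  have each: "(\<Sum>m'\<in>UNIV. \<sigma> w' m' * ?V m') \<le> ?V best" for w'
    using \<sigma> best unfolding msg_strat_def by (intro convex_comb_le) auto
  have "?V m = ?V best"
  proof (rule ccontr)
    assume "?V m \<noteq> ?V best"
    then have "(\<Sum>m'\<in>UNIV. \<sigma> w m' * ?V m') < ?V best"
      using \<sigma> best used unfolding msg_strat_def by (intro convex_comb_less) (auto simp: order.strict_iff_order)
    then have "payoff mu (\<lambda>a w. v a) \<sigma> \<rho> < ?V best"
      unfolding payoff_transparent using full each by (intro convex_comb_less[OF mu]) auto
    then show False
      using ge by linarith
  qed
  moreover have "payoff mu (\<lambda>a w. v a) \<sigma> \<rho> \<le> ?V best"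
    unfolding payoff_transparent using each by (intro convex_comb_le[OF mu])
  ultimately show ?thesis
    using ge by linarith
qed

lemma payoff_le_Sup:
  assumes mu: "is_distr mu" and strats: "\<And>\<sigma> \<rho>. Q \<sigma> \<rho> \<Longrightarrow> msg_strat \<sigma> \<and> act_strat \<rho>" and "Q \<sigma> \<rho>"
  shows "payoff mu u \<sigma> \<rho> \<le> Sup {payoff mu u \<sigma> \<rho> | \<sigma> \<rho>. Q \<sigma> \<rho>}"
proof (rule cSup_upper)
  let ?B = "Max (range (case_prod u))"
  have "u a w \<le> ?B" for a w
    by (rule Max_ge) auto
  then show "bdd_above {payoff mu u \<sigma> \<rho> | \<sigma> \<rho>. Q \<sigma> \<rho>}"
    using strats by (intro bdd_aboveI[of _ ?B]) (auto intro: payoff_le[OF mu])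
qed (use assms in blast)

lemma le_persuasion_payoff:
  fixes \<sigma> :: "'w::finite \<Rightarrow> 'm::finite \<Rightarrow> real"
  assumes "is_distr mu" "msg_strat \<sigma>" "act_strat \<rho>" "R_BR mu uR \<sigma> \<rho>"
  shows "payoff mu uS \<sigma> \<rho> \<le> persuasion_payoff mu uS uR TYPE('m)"
  unfolding persuasion_payoff_def using assms by (intro payoff_le_Sup) auto

lemma le_partitional_persuasion_payoff:
  fixes \<sigma> :: "'w::finite \<Rightarrow> 'm::finite \<Rightarrow> real"
  assumes "is_distr mu" "msg_strat \<sigma>" "partitional \<sigma>" "act_strat \<rho>" "R_BR mu uR \<sigma> \<rho>"
  shows "payoff mu uS \<sigma> \<rho> \<le> partitional_persuasion_payoff mu uS uR TYPE('m)"
  unfolding partitional_persuasion_payoff_def using assms by (intro payoff_le_Sup) auto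

lemma le_cheap_talk_payoff:
  fixes \<sigma> :: "'w::finite \<Rightarrow> 'm::finite \<Rightarrow> real"
  assumes "is_distr mu" "msg_strat \<sigma>" "act_strat \<rho>" "S_BR mu uS \<sigma> \<rho>" "R_BR mu uR \<sigma> \<rho>"
  shows "payoff mu uS \<sigma> \<rho> \<le> cheap_talk_payoff mu uS uR TYPE('m)"
  unfolding cheap_talk_payoff_def using assms by (intro payoff_le_Sup) auto

lemma babbling_equilibrium:
  fixes uR :: "'a::finite \<Rightarrow> 'w::finite \<Rightarrow> real"
  assumes mu: "is_distr mu" and a0: "\<And>b. prior_util mu uR b \<le> prior_util mu uR a0"
  shows "\<exists>(\<sigma> :: 'w \<Rightarrow> 'm::finite \<Rightarrow> real) \<rho>. msg_strat \<sigma> \<and> partitional \<sigma> \<and> act_strat \<rho>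
    \<and> R_BR mu uR \<sigma> \<rho> \<and> S_BR mu (\<lambda>a w. v a) \<sigma> \<rho> \<and> payoff mu (\<lambda>a w. v a) \<sigma> \<rho> = v a0"
proof (intro exI conjI)
  define \<sigma>0 :: "'w \<Rightarrow> 'm \<Rightarrow> real" where "\<sigma>0 = (\<lambda>w. point_mass undefined)"
  define \<rho>0 :: "'m \<Rightarrow> 'a \<Rightarrow> real" where "\<rho>0 = (\<lambda>m. point_mass a0)"
  show \<sigma>0: "msg_strat \<sigma>0"
    by (simp add: \<sigma>0_def msg_strat_def is_distr_point_mass)
  show "partitional \<sigma>0"
    by (simp add: \<sigma>0_def partitional_def point_mass_def)
  show "act_strat \<rho>0"
    unfolding \<rho>0_def by (rule act_strat_pure)
  have "interim_util mu uR \<sigma>0 m b = point_mass undefined m * prior_util mu uR b" for m b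
    by (simp add: interim_util_def prior_util_def \<sigma>0_def sum_distrib_left mult_ac)
  then show "R_BR mu uR \<sigma>0 \<rho>0"
    unfolding \<rho>0_def using a0 by (intro R_BR_pure_reply) (simp add: point_mass_def)
  have const: "msg_value v \<rho>0 m = v a0" for m
    by (simp add: msg_value_def \<rho>0_def)
  then show "payoff mu (\<lambda>a w. v a) \<sigma>0 \<rho>0 = v a0"
    using payoff_msg_value_const[OF mu \<sigma>0] by blast
  show "S_BR mu (\<lambda>a w. v a) \<sigma>0 \<rho>0"
    unfolding S_BR_def using payoff_msg_value_const[OF mu _ const] \<sigma>0 by simp
qed

lemma cheap_talk_payoff_le:
  fixes uR :: "'a::finite \<Rightarrow> 'w::finite \<Rightarrow> real"
  assumes mu: "is_distr mu"
    and bound: "\<And>(\<sigma> :: 'w \<Rightarrow> 'm::finite \<Rightarrow> real) \<rho>. msg_strat \<sigma> \<Longrightarrow> act_strat \<rho> \<Longrightarrow>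
      S_BR mu (\<lambda>a w. v a) \<sigma> \<rho> \<Longrightarrow> R_BR mu uR \<sigma> \<rho> \<Longrightarrow> payoff mu (\<lambda>a w. v a) \<sigma> \<rho> \<le> B"
  shows "cheap_talk_payoff mu (\<lambda>a w. v a) uR TYPE('m) \<le> B"
  unfolding cheap_talk_payoff_def
proof (rule cSup_least)
  obtain a0 where "\<And>b. prior_util mu uR b \<le> prior_util mu uR a0"
    using ex_max_finite[of UNIV "prior_util mu uR"] by auto
  note babbling = babbling_equilibrium[OF mu this, where v = v]
  show "{payoff mu (\<lambda>a w. v a) \<sigma> \<rho> | (\<sigma> :: 'w \<Rightarrow> 'm \<Rightarrow> real) \<rho>.
      msg_strat \<sigma> \<and> act_strat \<rho> \<and> S_BR mu (\<lambda>a w. v a) \<sigma> \<rho> \<and> R_BR mu uR \<sigma> \<rho>} \<noteq> {}"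
    using babbling by blast
qed (use bound in blast)

lemma partitional_persuasion_payoff_le:
  fixes uR :: "'a::finite \<Rightarrow> 'w::finite \<Rightarrow> real"
  assumes mu: "is_distr mu"
    and bound: "\<And>(\<sigma> :: 'w \<Rightarrow> 'm::finite \<Rightarrow> real) \<rho>. msg_strat \<sigma> \<Longrightarrow> partitional \<sigma> \<Longrightarrow>
      act_strat \<rho> \<Longrightarrow> R_BR mu uR \<sigma> \<rho> \<Longrightarrow> payoff mu (\<lambda>a w. v a) \<sigma> \<rho> \<le> B"
  shows "partitional_persuasion_payoff mu (\<lambda>a w. v a) uR TYPE('m) \<le> B"
  unfolding partitional_persuasion_payoff_def
proof (rule cSup_least)
  obtain a0 where "\<And>b. prior_util mu uR b \<le> prior_util mu uR a0"
    using ex_max_finite[of UNIV "prior_util mu uR"] by auto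
  note babbling = babbling_equilibrium[OF mu this, where v = v]
  show "{payoff mu (\<lambda>a w. v a) \<sigma> \<rho> | (\<sigma> :: 'w \<Rightarrow> 'm \<Rightarrow> real) \<rho>.
      msg_strat \<sigma> \<and> partitional \<sigma> \<and> act_strat \<rho> \<and> R_BR mu uR \<sigma> \<rho>} \<noteq> {}"
    using babbling by blast
qed (use bound in blast)

lemma msg_prob_pos_imp_sent:
  assumes "is_distr mu" and "0 < msg_prob mu \<sigma> m"
  shows "\<exists>w. 0 < \<sigma> w m"
proof (rule ccontr)
  assume "\<not> ?thesis"
  then have "msg_prob mu \<sigma> m \<le> 0"
    using assms(1) unfolding msg_prob_def is_distr_def
    by (intro sum_nonpos) (simp add: mult_nonneg_nonpos not_less)
  with assms(2) show False
    by simp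
qed

lemma equilibrium_payoff_le_preferred_reply:
  assumes mu: "is_distr mu" and full: "\<forall>w. mu w > 0" and \<sigma>: "msg_strat \<sigma>" and \<rho>: "act_strat \<rho>"
    and S: "S_BR mu (\<lambda>a w. v a) \<sigma> \<rho>" and R: "R_BR mu uR \<sigma> \<rho>" and used: "0 < msg_prob mu \<sigma> m"
    and preferred: "\<And>a. \<forall>b. interim_util mu uR \<sigma> m b \<le> interim_util mu uR \<sigma> m a \<Longrightarrow> v a \<le> v (am m)"
  shows "payoff mu (\<lambda>a w. v a) \<sigma> \<rho> \<le> v (am m)"
proof -
  obtain w where "0 < \<sigma> w m"
    using msg_prob_pos_imp_sent[OF mu used] by blast
  then have "msg_value v \<rho> m = payoff mu (\<lambda>a w. v a) \<sigma> \<rho>"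
    by (rule S_BR_used_msg_value[OF mu full \<sigma> S])
  moreover have "msg_value v \<rho> m \<le> v (am m)"
    using preferred by (rule msg_value_le_preferred_reply[OF R \<rho>])
  ultimately show ?thesis
    by simp
qed

lemma ex_worst_used_msg:
  fixes f :: "'m::finite \<Rightarrow> real"
  assumes "is_distr mu" "msg_strat \<sigma>"
  obtains m0 where "0 < msg_prob mu \<sigma> m0" "\<And>m. 0 < msg_prob mu \<sigma> m \<Longrightarrow> f m0 \<le> f m"
proof -
  have "{m. 0 < msg_prob mu \<sigma> m} \<noteq> {}"
  proof
    assume "{m. 0 < msg_prob mu \<sigma> m} = {}"
    then have "(\<Sum>m\<in>UNIV. msg_prob mu \<sigma> m) \<le> 0"
      by (intro sum_nonpos) (auto simp: not_less)
    with sum_msg_prob[OF assms] show False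
      by simp
  qed
  then show ?thesis
    using that ex_max_finite[of "{m. 0 < msg_prob mu \<sigma> m}" "\<lambda>m. - f m"] by auto
qed

lemma prior_util_gap_le_msg_prob:
  assumes mu: "is_distr mu" and \<sigma>: "msg_strat \<sigma>" and u: "\<forall>a w. 0 \<le> u a w \<and> u a w \<le> 1"
    and am: "\<And>m b. interim_util mu u \<sigma> m b \<le> interim_util mu u \<sigma> m (am m)"
  shows "prior_util mu u b - prior_util mu u a \<le> (\<Sum>m | am m \<noteq> a. msg_prob mu \<sigma> m)"
proof -
  have "interim_util mu u \<sigma> m b - interim_util mu u \<sigma> m a \<le> (if am m \<noteq> a then msg_prob mu \<sigma> m else 0)"
    for m
    using am[of m b] interim_util_diff_ge[OF mu \<sigma> u, of m a b] by auto
  then have "(\<Sum>m\<in>UNIV. interim_util mu u \<sigma> m b - interim_util mu u \<sigma> m a)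
      \<le> (\<Sum>m\<in>UNIV. if am m \<noteq> a then msg_prob mu \<sigma> m else 0)"
    by (rule sum_mono)
  then show ?thesis
    using sum.inter_filter[of UNIV "msg_prob mu \<sigma>" "\<lambda>m. am m \<noteq> a"]
    by (simp add: sum_subtractf sum_interim_util[OF \<sigma>])
qed

lemma value_gain_over_worst_induced_action:
  assumes mu: "is_distr mu" and \<sigma>: "msg_strat \<sigma>"
    and gap: "\<And>a b. a \<noteq> b \<Longrightarrow> d \<le> \<bar>v a - v b\<bar>"
    and worst: "\<And>m. 0 < msg_prob mu \<sigma> m \<Longrightarrow> v a \<le> v (am m)"
  shows "v a + d * (\<Sum>m | am m \<noteq> a. msg_prob mu \<sigma> m) \<le> (\<Sum>m\<in>UNIV. msg_prob mu \<sigma> m * v (am m))"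
proof -
  have "msg_prob mu \<sigma> m * v a + (if am m \<noteq> a then d * msg_prob mu \<sigma> m else 0)
      \<le> msg_prob mu \<sigma> m * v (am m)" for m
  proof (cases "0 < msg_prob mu \<sigma> m")
    case True
    then have "am m \<noteq> a \<Longrightarrow> d + v a \<le> v (am m)"
      using gap[of "am m" a] worst[of m] by linarith
    then show ?thesis
      using True mult_right_mono[of "d + v a" "v (am m)" "msg_prob mu \<sigma> m"] by (auto simp: algebra_simps)
  next
    case False
    then show ?thesis
      using msg_prob_nonneg[OF mu \<sigma>, of m] by simp
  qed
  then have "(\<Sum>m\<in>UNIV. msg_prob mu \<sigma> m * v a + (if am m \<noteq> a then d * msg_prob mu \<sigma> m else 0))
      \<le> (\<Sum>m\<in>UNIV. msg_prob mu \<sigma> m * v (am m))"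
    by (rule sum_mono)
  then show ?thesis
    using sum.inter_filter[of UNIV "\<lambda>m. d * msg_prob mu \<sigma> m" "\<lambda>m. am m \<noteq> a"]
    by (simp add: sum.distrib sum_distrib_left sum_msg_prob[OF mu \<sigma>] flip: sum_distrib_right)
qed

lemma cheap_talk_equilibrium_payoff_le:
  fixes \<sigma> :: "'w::finite \<Rightarrow> 'm::finite \<Rightarrow> real" and uR :: "'a::finite \<Rightarrow> 'w \<Rightarrow> real"
  assumes mu: "is_distr mu" and full: "\<forall>w. mu w > 0" and uR: "\<forall>a w. 0 \<le> uR a w \<and> uR a w \<le> 1"
    and d: "0 \<le> d" "\<And>a b. a \<noteq> b \<Longrightarrow> d \<le> \<bar>v a - v b\<bar>"
    and \<gamma>: "\<And>a b. prior_util mu uR a < prior_util mu uR b \<Longrightarrow> \<gamma> \<le> prior_util mu uR b - prior_util mu uR a"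
    and \<sigma>: "msg_strat \<sigma>" and \<rho>: "act_strat \<rho>"
    and S: "S_BR mu (\<lambda>a w. v a) \<sigma> \<rho>" and R: "R_BR mu uR \<sigma> \<rho>"
  shows "payoff mu (\<lambda>a w. v a) \<sigma> \<rho> \<le> max (partitional_persuasion_payoff mu (\<lambda>a w. v a) uR TYPE('m))
    (persuasion_payoff mu (\<lambda>a w. v a) uR TYPE('m) - d * \<gamma>)"
proof -
  let ?g = "interim_util mu uR \<sigma>"
  obtain am where am: "\<And>m b. ?g m b \<le> ?g m (am m)"
    and preferred: "\<And>m a. \<forall>b. ?g m b \<le> ?g m a \<Longrightarrow> v a \<le> v (am m)"
    using ex_sender_preferred_reply[of ?g v] by blast
  obtain m0 where used: "0 < msg_prob mu \<sigma> m0"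
    and worst: "\<And>m. 0 < msg_prob mu \<sigma> m \<Longrightarrow> v (am m0) \<le> v (am m)"
    using ex_worst_used_msg[OF mu \<sigma>, where f = "\<lambda>m. v (am m)"] by blast
  define a where "a = am m0"
  define q where "q = (\<Sum>m | am m \<noteq> a. msg_prob mu \<sigma> m)"
  have payoff_le_a: "payoff mu (\<lambda>a w. v a) \<sigma> \<rho> \<le> v a"
    unfolding a_def using preferred by (rule equilibrium_payoff_le_preferred_reply[OF mu full \<sigma> \<rho> S R used])
  show ?thesis
  proof (cases "q < \<gamma>")
    case True
    have "prior_util mu uR b \<le> prior_util mu uR a" for b
      using \<gamma>[of a b] prior_util_gap_le_msg_prob[OF mu \<sigma> uR am, of b a] True
      unfolding q_def by force
    then have "v a \<le> partitional_persuasion_payoff mu (\<lambda>a w. v a) uR TYPE('m)"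
      using babbling_equilibrium[OF mu, where v = v and 'm = 'm] le_partitional_persuasion_payoff[OF mu]
      by metis
    then show ?thesis
      using payoff_le_a by simp
  next
    case False
    have "v a + d * q \<le> (\<Sum>m\<in>UNIV. msg_prob mu \<sigma> m * v (am m))"
      unfolding q_def a_def using mu \<sigma> d(2) worst by (rule value_gain_over_worst_induced_action)
    also have "\<dots> = payoff mu (\<lambda>a w. v a) \<sigma> (\<lambda>m. point_mass (am m))"
      by (simp add: payoff_transparent_msg_prob msg_value_def)
    also have "\<dots> \<le> persuasion_payoff mu (\<lambda>a w. v a) uR TYPE('m)"
      using am by (intro le_persuasion_payoff[OF mu \<sigma> act_strat_pure] R_BR_pure_reply)
    finally have "payoff mu (\<lambda>a w. v a) \<sigma> \<rho> \<le> persuasion_payoff mu (\<lambda>a w. v a) uR TYPE('m) - d * q"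
      using payoff_le_a by simp
    moreover have "d * \<gamma> \<le> d * q"
      using False d(1) by (simp add: mult_left_mono)
    ultimately show ?thesis
      by simp
  qed
qed

definition shift_mass :: "real \<Rightarrow> 'm \<Rightarrow> 'm \<Rightarrow> ('w \<Rightarrow> 'm \<Rightarrow> real) \<Rightarrow> 'w \<Rightarrow> 'm \<Rightarrow> real" where
  "shift_mass t m1 m2 \<sigma> w m = \<sigma> w m + t * \<sigma> w m2 * (point_mass m1 m - point_mass m2 m)"

lemma msg_strat_shift_mass:
  assumes \<sigma>: "msg_strat \<sigma>" and t: "0 \<le> t" "t \<le> 1" and "m1 \<noteq> m2"
  shows "msg_strat (shift_mass t m1 m2 \<sigma>)"
  unfolding msg_strat_def is_distr_def
proof (intro allI conjI)
  fix w m
  have "0 \<le> \<sigma> w m" "0 \<le> \<sigma> w m2"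
    using \<sigma> by (auto simp: msg_strat_def is_distr_def)
  moreover have "0 \<le> (1 - t) * \<sigma> w m2"
    using t \<open>0 \<le> \<sigma> w m2\<close> by simp
  ultimately show "0 \<le> shift_mass t m1 m2 \<sigma> w m"
    using t \<open>m1 \<noteq> m2\<close> by (auto simp: shift_mass_def point_mass_def algebra_simps)
next
  fix w
  show "sum (shift_mass t m1 m2 \<sigma> w) UNIV = 1"
    using \<sigma> by (simp add: shift_mass_def sum.distrib msg_strat_def is_distr_def
        sum_subtractf flip: sum_distrib_left)
qed

lemma interim_util_shift_mass:
  "interim_util mu u (shift_mass t m1 m2 \<sigma>) m a
    = interim_util mu u \<sigma> m a + t * (point_mass m1 m - point_mass m2 m) * interim_util mu u \<sigma> m2 a"
  by (simp add: interim_util_def shift_mass_def algebra_simps sum.distrib sum_subtractf sum_distrib_left)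

lemma msg_prob_shift_mass:
  "msg_prob mu (shift_mass t m1 m2 \<sigma>) m
    = msg_prob mu \<sigma> m + t * (point_mass m1 m - point_mass m2 m) * msg_prob mu \<sigma> m2"
  by (simp add: msg_prob_def shift_mass_def algebra_simps sum.distrib sum_subtractf sum_distrib_left)

lemma payoff_shift_mass:
  "payoff mu (\<lambda>a w. v a) (shift_mass t m1 m2 \<sigma>) \<rho>
    = payoff mu (\<lambda>a w. v a) \<sigma> \<rho> + t * msg_prob mu \<sigma> m2 * (msg_value v \<rho> m1 - msg_value v \<rho> m2)"
  by (simp add: payoff_transparent_msg_prob msg_prob_shift_mass algebra_simps sum.distrib
      sum_subtractf flip: sum_distrib_left)

lemma R_BR_shift_mass:
  assumes mu: "is_distr mu" and \<sigma>: "msg_strat \<sigma>" and uR: "\<forall>a w. 0 \<le> uR a w \<and> uR a w \<le> 1"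
    and am: "\<And>m b. interim_util mu uR \<sigma> m b \<le> interim_util mu uR \<sigma> m (am m)"
    and t: "0 \<le> t" "t \<le> 1" and "m1 \<noteq> m2"
    and margin: "\<And>b. b \<noteq> am m1 \<Longrightarrow> t \<le> interim_util mu uR \<sigma> m1 (am m1) - interim_util mu uR \<sigma> m1 b"
  shows "R_BR mu uR (shift_mass t m1 m2 \<sigma>) (\<lambda>m. point_mass (am m))"
proof (rule R_BR_pure_reply)
  let ?g = "interim_util mu uR \<sigma>"
  fix m b
  consider "m = m1" | "m = m2" | "m \<noteq> m1" "m \<noteq> m2"
    by blast
  then show "interim_util mu uR (shift_mass t m1 m2 \<sigma>) m b
      \<le> interim_util mu uR (shift_mass t m1 m2 \<sigma>) m (am m)"
  proof cases
    case 1
    have "?g m1 b + t * ?g m2 b \<le> ?g m1 (am m1) + t * ?g m2 (am m1)"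
    proof (cases "b = am m1")
      case False
      have "?g m2 b - ?g m2 (am m1) \<le> 1"
        using interim_util_diff_ge[OF mu \<sigma> uR, of m2 "am m1" b] msg_prob_le_1[OF mu \<sigma>, of m2]
        by linarith
      then have "t * (?g m2 b - ?g m2 (am m1)) \<le> t"
        using t(1) mult_left_mono[of _ 1 t] by simp
      then show ?thesis
        using margin[OF False] by (simp add: algebra_simps)
    qed simp
    then show ?thesis
      using 1 \<open>m1 \<noteq> m2\<close> by (simp add: interim_util_shift_mass point_mass_def)
  next
    case 2
    then have "(1 - t) * ?g m2 b \<le> (1 - t) * ?g m2 (am m2)"
      using am t(2) by (simp add: mult_left_mono)
    then show ?thesis
      using 2 \<open>m1 \<noteq> m2\<close> by (simp add: interim_util_shift_mass point_mass_def algebra_simps)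
  next
    case 3
    then show ?thesis
      using am by (simp add: interim_util_shift_mass point_mass_def)
  qed
qed

lemma partitional_eq_point_mass:
  assumes \<sigma>: "msg_strat \<sigma>" and "partitional \<sigma>"
  obtains f where "\<sigma> = (\<lambda>w. point_mass (f w))"
proof -
  obtain f where f: "\<And>w. \<sigma> w (f w) = 1"
    using \<open>partitional \<sigma>\<close> unfolding partitional_def by metis
  have "\<sigma> w m = 0" if "m \<noteq> f w" for w m
  proof -
    have nonneg: "\<forall>m. 0 \<le> \<sigma> w m" and sum1: "sum (\<sigma> w) UNIV = 1"
      using \<sigma> by (auto simp: msg_strat_def is_distr_def)
    have "sum (\<sigma> w) {f w, m} \<le> sum (\<sigma> w) UNIV"
      using nonneg by (intro sum_mono2) auto
    then show ?thesis
      using that f[of w] nonneg sum1 by (simp add: order.antisym)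
  qed
  then have "\<sigma> = (\<lambda>w. point_mass (f w))"
    using f by (auto simp: point_mass_def fun_eq_iff)
  then show ?thesis
    by (rule that)
qed

lemma interim_util_point_mass:
  "interim_util mu u (\<lambda>w. point_mass (f w)) m a = (\<Sum>w | f w = m. mu w * u a w)"
  using sum.inter_filter[of UNIV "\<lambda>w. mu w * u a w" "\<lambda>w. f w = m"]
  by (simp add: interim_util_def point_mass_def if_distrib[where f="\<lambda>c. _ * c * _"] eq_commute
      cong: if_cong)

lemma partition_best_reply_margin:
  assumes generic: "\<And>C a b. C \<noteq> {} \<Longrightarrow> a \<noteq> b \<Longrightarrow> \<beta> \<le> \<bar>\<Sum>w\<in>C. mu w * (uR a w - uR b w)\<bar>"
    and am: "\<And>m b. interim_util mu uR (\<lambda>w. point_mass (f w)) m b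
      \<le> interim_util mu uR (\<lambda>w. point_mass (f w)) m (am m)"
    and "m \<in> range f" "b \<noteq> am m"
  shows "\<beta> \<le> interim_util mu uR (\<lambda>w. point_mass (f w)) m (am m)
    - interim_util mu uR (\<lambda>w. point_mass (f w)) m b"
proof -
  have "interim_util mu uR (\<lambda>w. point_mass (f w)) m (am m)
      - interim_util mu uR (\<lambda>w. point_mass (f w)) m b = (\<Sum>w | f w = m. mu w * (uR (am m) w - uR b w))"
    by (simp add: interim_util_point_mass algebra_simps sum_subtractf)
  moreover have "{w. f w = m} \<noteq> {}"
    using \<open>m \<in> range f\<close> by auto
  ultimately show ?thesis
    using generic[of "{w. f w = m}" "am m" b] am[of m b] \<open>b \<noteq> am m\<close> by simp
qed

lemma partition_value_plus_gain_le_persuasion_payoff: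
  fixes f :: "'w::finite \<Rightarrow> 'm::finite" and uR :: "'a::finite \<Rightarrow> 'w \<Rightarrow> real"
  assumes mu: "is_distr mu" and uR: "\<forall>a w. 0 \<le> uR a w \<and> uR a w \<le> 1"
    and d: "0 \<le> d" "\<And>a b. a \<noteq> b \<Longrightarrow> d \<le> \<bar>v a - v b\<bar>"
    and \<beta>: "0 < \<beta>" "\<And>C a b. C \<noteq> {} \<Longrightarrow> a \<noteq> b \<Longrightarrow> \<beta> \<le> \<bar>\<Sum>w\<in>C. mu w * (uR a w - uR b w)\<bar>"
    and \<mu>: "0 \<le> \<mu>" "\<And>w. \<mu> \<le> mu w"
    and am: "\<And>m b. interim_util mu uR (\<lambda>w. point_mass (f w)) m b
      \<le> interim_util mu uR (\<lambda>w. point_mass (f w)) m (am m)"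
    and worse: "v (am (f w2)) < v (am (f w1))"
  shows "(\<Sum>w\<in>UNIV. mu w * v (am (f w))) + min 1 \<beta> * d * \<mu>
    \<le> persuasion_payoff mu (\<lambda>a w. v a) uR TYPE('m)"
proof -
  define \<sigma> where "\<sigma> = (\<lambda>w. point_mass (f w))"
  let ?g = "interim_util mu uR \<sigma>"
  define m1 where "m1 = f w1"
  define m2 where "m2 = f w2"
  define t where "t = min 1 \<beta>"
  have "m1 \<noteq> m2" "am m1 \<noteq> am m2"
    using worse by (auto simp: m1_def m2_def)
  have t: "0 \<le> t" "t \<le> 1" "t \<le> \<beta>"
    using \<beta>(1) by (auto simp: t_def)
  have \<sigma>: "msg_strat \<sigma>"
    by (simp add: \<sigma>_def msg_strat_def is_distr_point_mass)
  have margin: "t \<le> ?g m1 (am m1) - ?g m1 b" if "b \<noteq> am m1" for b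
    using partition_best_reply_margin[OF \<beta>(2) am, of m1 b] that t(3) by (simp add: \<sigma>_def m1_def)
  have gain: "\<mu> * d \<le> msg_prob mu \<sigma> m2 * (v (am m1) - v (am m2))"
  proof (rule mult_mono)
    show "\<mu> \<le> msg_prob mu \<sigma> m2"
      using \<mu>(2)[of w2] msg_prob_ge[OF mu \<sigma>, of w2 m2] by (simp add: \<sigma>_def m2_def point_mass_def)
    show "d \<le> v (am m1) - v (am m2)"
      using d(2)[OF \<open>am m1 \<noteq> am m2\<close>] worse by (simp add: m1_def m2_def)
  qed (use \<mu>(1) d(1) msg_prob_nonneg[OF mu \<sigma>] in auto)
  define \<rho> where "\<rho> = (\<lambda>m. point_mass (am m))"
  have "R_BR mu uR (shift_mass t m1 m2 \<sigma>) \<rho>"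
    unfolding \<rho>_def using am margin t \<open>m1 \<noteq> m2\<close>
    by (intro R_BR_shift_mass[OF mu \<sigma> uR]) (auto simp: \<sigma>_def)
  then have "payoff mu (\<lambda>a w. v a) (shift_mass t m1 m2 \<sigma>) \<rho> \<le> persuasion_payoff mu (\<lambda>a w. v a) uR TYPE('m)"
    using msg_strat_shift_mass[OF \<sigma> t(1,2) \<open>m1 \<noteq> m2\<close>] act_strat_pure
    by (intro le_persuasion_payoff[OF mu]) (auto simp: \<rho>_def)
  moreover have "payoff mu (\<lambda>a w. v a) (shift_mass t m1 m2 \<sigma>) \<rho>
      = (\<Sum>w\<in>UNIV. mu w * v (am (f w))) + t * msg_prob mu \<sigma> m2 * (v (am m1) - v (am m2))"
    unfolding payoff_shift_mass by (simp add: payoff_transparent msg_value_def \<sigma>_def \<rho>_def)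
  moreover have "t * d * \<mu> \<le> t * msg_prob mu \<sigma> m2 * (v (am m1) - v (am m2))"
    using mult_left_mono[OF gain t(1)] by (simp add: mult_ac)
  ultimately show ?thesis
    by (simp add: t_def)
qed

lemma partition_const_value_le_cheap_talk_payoff:
  fixes f :: "'w::finite \<Rightarrow> 'm::finite" and uR :: "'a::finite \<Rightarrow> 'w \<Rightarrow> real"
  assumes mu: "is_distr mu"
    and am: "\<And>m b. interim_util mu uR (\<lambda>w. point_mass (f w)) m b
      \<le> interim_util mu uR (\<lambda>w. point_mass (f w)) m (am m)"
    and const: "\<And>w. v (am (f w)) = c"
  shows "c \<le> cheap_talk_payoff mu (\<lambda>a w. v a) uR TYPE('m)"
proof -
  define \<sigma> where "\<sigma> = (\<lambda>w. point_mass (f w))"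
  define bm where "bm m = (if m \<in> range f then am m else am (f undefined))" for m
  define \<rho> where "\<rho> = (\<lambda>m. point_mass (bm m))"
  have \<sigma>: "msg_strat \<sigma>"
    by (simp add: \<sigma>_def msg_strat_def is_distr_point_mass)
  have "interim_util mu uR \<sigma> m b \<le> interim_util mu uR \<sigma> m (bm m)" for m b
  proof (cases "m \<in> range f")
    case False
    then have "{w. f w = m} = {}"
      by auto
    then show ?thesis
      by (simp add: \<sigma>_def interim_util_point_mass)
  qed (use am in \<open>simp add: \<sigma>_def bm_def\<close>)
  then have R: "R_BR mu uR \<sigma> \<rho>"
    unfolding \<rho>_def by (rule R_BR_pure_reply)
  have const_value: "msg_value v \<rho> m = c" for m
    using const by (auto simp: msg_value_def \<rho>_def bm_def)
  have S: "S_BR mu (\<lambda>a w. v a) \<sigma> \<rho>"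
    unfolding S_BR_def using payoff_msg_value_const[OF mu _ const_value] \<sigma> by simp
  have "payoff mu (\<lambda>a w. v a) \<sigma> \<rho> \<le> cheap_talk_payoff mu (\<lambda>a w. v a) uR TYPE('m)"
    by (rule le_cheap_talk_payoff[OF mu \<sigma> _ S R]) (simp add: \<rho>_def act_strat_pure)
  then show ?thesis
    using payoff_msg_value_const[OF mu \<sigma> const_value] by simp
qed

lemma partitional_profile_payoff_le:
  fixes \<sigma> :: "'w::finite \<Rightarrow> 'm::finite \<Rightarrow> real" and uR :: "'a::finite \<Rightarrow> 'w \<Rightarrow> real"
  assumes mu: "is_distr mu" and uR: "\<forall>a w. 0 \<le> uR a w \<and> uR a w \<le> 1"
    and d: "0 \<le> d" "\<And>a b. a \<noteq> b \<Longrightarrow> d \<le> \<bar>v a - v b\<bar>"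
    and \<beta>: "0 < \<beta>" "\<And>C a b. C \<noteq> {} \<Longrightarrow> a \<noteq> b \<Longrightarrow> \<beta> \<le> \<bar>\<Sum>w\<in>C. mu w * (uR a w - uR b w)\<bar>"
    and \<mu>: "0 \<le> \<mu>" "\<And>w. \<mu> \<le> mu w"
    and \<sigma>: "msg_strat \<sigma>" "partitional \<sigma>" and \<rho>: "act_strat \<rho>" and R: "R_BR mu uR \<sigma> \<rho>"
  shows "payoff mu (\<lambda>a w. v a) \<sigma> \<rho> \<le> max (cheap_talk_payoff mu (\<lambda>a w. v a) uR TYPE('m))
    (persuasion_payoff mu (\<lambda>a w. v a) uR TYPE('m) - min 1 \<beta> * d * \<mu>)"
proof -
  obtain f where f: "\<sigma> = (\<lambda>w. point_mass (f w))"
    using partitional_eq_point_mass[OF \<sigma>] by blast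
  let ?g = "interim_util mu uR \<sigma>"
  obtain am where am: "\<And>m b. ?g m b \<le> ?g m (am m)"
    and preferred: "\<And>m a. \<forall>b. ?g m b \<le> ?g m a \<Longrightarrow> v a \<le> v (am m)"
    using ex_sender_preferred_reply[of ?g v] by blast
  have "mu w * msg_value v \<rho> (f w) \<le> mu w * v (am (f w))" for w
    using mu preferred unfolding is_distr_def
    by (intro mult_left_mono msg_value_le_preferred_reply[OF R \<rho>]) auto
  then have payoff_le: "payoff mu (\<lambda>a w. v a) \<sigma> \<rho> \<le> (\<Sum>w\<in>UNIV. mu w * v (am (f w)))"
    unfolding payoff_transparent f by (simp add: sum_mono)
  have am_f: "\<And>m b. interim_util mu uR (\<lambda>w. point_mass (f w)) m b
      \<le> interim_util mu uR (\<lambda>w. point_mass (f w)) m (am m)"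
    using am by (simp add: f)
  show ?thesis
  proof (cases "\<exists>w1 w2. v (am (f w2)) < v (am (f w1))")
    case True
    then obtain w1 w2 where "v (am (f w2)) < v (am (f w1))"
      by blast
    from partition_value_plus_gain_le_persuasion_payoff[OF mu uR d \<beta> \<mu> am_f this] show ?thesis
      using payoff_le by simp
  next
    case False
    define c where "c = v (am (f undefined))"
    have const: "v (am (f w)) = c" for w
      using False unfolding c_def by (meson linorder_neqE)
    then have "(\<Sum>w\<in>UNIV. mu w * v (am (f w))) = c"
      using mu by (simp add: is_distr_def flip: sum_distrib_right)
    moreover have "c \<le> cheap_talk_payoff mu (\<lambda>a w. v a) uR TYPE('m)"
      using mu am_f const by (rule partition_const_value_le_cheap_talk_payoff)
    ultimately show ?thesis
      using payoff_le by simp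
  qed
qed

definition generic_receiver :: "('w::finite \<Rightarrow> real) \<Rightarrow> ('a \<Rightarrow> 'w \<Rightarrow> real) \<Rightarrow> bool" where
  "generic_receiver mu u \<longleftrightarrow> (\<forall>C a b. C \<noteq> {} \<longrightarrow> a \<noteq> b \<longrightarrow> (\<Sum>w\<in>C. mu w * (u a w - u b w)) \<noteq> 0)"

lemma inj_value_gap:
  fixes v :: "'a::finite \<Rightarrow> real"
  assumes "inj v"
  obtains d where "0 < d" "\<And>a b. a \<noteq> b \<Longrightarrow> d \<le> \<bar>v a - v b\<bar>"
proof -
  obtain d where "0 < d" "\<And>p. p \<in> {(a, b). a \<noteq> b} \<Longrightarrow> d \<le> (\<lambda>(a, b). \<bar>v a - v b\<bar>) p"
    by (rule finite_pos_lower_bound[of "{(a, b). a \<noteq> b}" "\<lambda>(a, b). \<bar>v a - v b\<bar>"])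
      (use assms in \<open>auto simp: inj_eq\<close>)
  then show ?thesis
    using that by auto
qed

lemma cheap_talk_payoff_le_max:
  fixes uR :: "'a::finite \<Rightarrow> 'w::finite \<Rightarrow> real"
  assumes mu: "is_distr mu" and full: "\<forall>w. mu w > 0" and uR: "\<forall>a w. 0 \<le> uR a w \<and> uR a w \<le> 1"
    and "inj v"
  obtains \<delta> where "0 < \<delta>" "cheap_talk_payoff mu (\<lambda>a w. v a) uR TYPE('m::finite)
    \<le> max (partitional_persuasion_payoff mu (\<lambda>a w. v a) uR TYPE('m))
        (persuasion_payoff mu (\<lambda>a w. v a) uR TYPE('m) - \<delta>)"
proof -
  obtain d where d: "0 < d" "\<And>a b. a \<noteq> b \<Longrightarrow> d \<le> \<bar>v a - v b\<bar>"
    using inj_value_gap[OF \<open>inj v\<close>] by blast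
  obtain \<gamma> where \<gamma>: "0 < \<gamma>" "\<And>p. p \<in> {(a, b). prior_util mu uR a < prior_util mu uR b}
      \<Longrightarrow> \<gamma> \<le> (\<lambda>(a, b). prior_util mu uR b - prior_util mu uR a) p"
    by (rule finite_pos_lower_bound[of "{(a, b). prior_util mu uR a < prior_util mu uR b}"
          "\<lambda>(a, b). prior_util mu uR b - prior_util mu uR a"]) auto
  have \<gamma>_le: "\<gamma> \<le> prior_util mu uR b - prior_util mu uR a"
    if "prior_util mu uR a < prior_util mu uR b" for a b
    using \<gamma>(2)[of "(a, b)"] that by simp
  show ?thesis
  proof (rule that)
    show "0 < d * \<gamma>"
      using d \<gamma> by simp
    show "cheap_talk_payoff mu (\<lambda>a w. v a) uR TYPE('m)
      \<le> max (partitional_persuasion_payoff mu (\<lambda>a w. v a) uR TYPE('m))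
          (persuasion_payoff mu (\<lambda>a w. v a) uR TYPE('m) - d * \<gamma>)"
      by (rule cheap_talk_payoff_le[OF mu cheap_talk_equilibrium_payoff_le[OF mu full uR
            less_imp_le[OF d(1)] d(2) \<gamma>_le]])
  qed
qed

lemma partitional_persuasion_payoff_le_max:
  fixes uR :: "'a::finite \<Rightarrow> 'w::finite \<Rightarrow> real"
  assumes mu: "is_distr mu" and full: "\<forall>w. mu w > 0" and uR: "\<forall>a w. 0 \<le> uR a w \<and> uR a w \<le> 1"
    and "inj v" and generic: "generic_receiver mu uR"
  obtains \<delta> where "0 < \<delta>" "partitional_persuasion_payoff mu (\<lambda>a w. v a) uR TYPE('m::finite)
    \<le> max (cheap_talk_payoff mu (\<lambda>a w. v a) uR TYPE('m))
        (persuasion_payoff mu (\<lambda>a w. v a) uR TYPE('m) - \<delta>)"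
proof -
  obtain d where d: "0 < d" "\<And>a b. a \<noteq> b \<Longrightarrow> d \<le> \<bar>v a - v b\<bar>"
    using inj_value_gap[OF \<open>inj v\<close>] by blast
  obtain \<beta> where \<beta>: "0 < \<beta>" "\<And>q. q \<in> {(C, a, b). C \<noteq> {} \<and> a \<noteq> b}
      \<Longrightarrow> \<beta> \<le> (\<lambda>(C, a, b). \<bar>\<Sum>w\<in>C. mu w * (uR a w - uR b w)\<bar>) q"
    by (rule finite_pos_lower_bound[of "{(C, a, b). C \<noteq> {} \<and> a \<noteq> b}"
          "\<lambda>(C, a, b). \<bar>\<Sum>w\<in>C. mu w * (uR a w - uR b w)\<bar>"])
      (use generic in \<open>auto simp: generic_receiver_def\<close>)
  obtain \<mu> where \<mu>: "0 < \<mu>" "\<And>w. w \<in> UNIV \<Longrightarrow> \<mu> \<le> mu w"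
    by (rule finite_pos_lower_bound[of UNIV mu]) (use full in auto)
  have \<mu>_le: "\<mu> \<le> mu w" for w
    using \<mu>(2) by simp
  have \<beta>_le: "\<beta> \<le> \<bar>\<Sum>w\<in>C. mu w * (uR a w - uR b w)\<bar>" if "C \<noteq> {}" "a \<noteq> b" for C a b
    using \<beta>(2)[of "(C, a, b)"] that by simp
  show ?thesis
  proof (rule that)
    show "0 < min 1 \<beta> * d * \<mu>"
      using d \<beta> \<mu> by simp
    show "partitional_persuasion_payoff mu (\<lambda>a w. v a) uR TYPE('m)
      \<le> max (cheap_talk_payoff mu (\<lambda>a w. v a) uR TYPE('m))
          (persuasion_payoff mu (\<lambda>a w. v a) uR TYPE('m) - min 1 \<beta> * d * \<mu>)"
      by (rule partitional_persuasion_payoff_le[OF mu partitional_profile_payoff_le[OF mu uR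
            less_imp_le[OF d(1)] d(2) \<beta>(1) \<beta>_le less_imp_le[OF \<mu>(1)] \<mu>_le]])
  qed
qed

theorem commitment_valuable_iff_values_randomization:
  fixes uR :: "'a::finite \<Rightarrow> 'w::finite \<Rightarrow> real"
  assumes "is_distr mu" "\<forall>w. mu w > 0" "\<forall>a w. 0 \<le> uR a w \<and> uR a w \<le> 1"
    and "inj v" "generic_receiver mu uR"
  shows "commitment_valuable mu (\<lambda>a w. v a) uR TYPE('m::finite)
    \<longleftrightarrow> values_randomization mu (\<lambda>a w. v a) uR TYPE('m)"
proof -
  obtain \<delta>1 where "0 < \<delta>1" "cheap_talk_payoff mu (\<lambda>a w. v a) uR TYPE('m)
    \<le> max (partitional_persuasion_payoff mu (\<lambda>a w. v a) uR TYPE('m))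
        (persuasion_payoff mu (\<lambda>a w. v a) uR TYPE('m) - \<delta>1)"
    using cheap_talk_payoff_le_max[OF assms(1-4)] by blast
  moreover obtain \<delta>2 where "0 < \<delta>2" "partitional_persuasion_payoff mu (\<lambda>a w. v a) uR TYPE('m)
    \<le> max (cheap_talk_payoff mu (\<lambda>a w. v a) uR TYPE('m))
        (persuasion_payoff mu (\<lambda>a w. v a) uR TYPE('m) - \<delta>2)"
    using partitional_persuasion_payoff_le_max[OF assms] by blast
  ultimately show ?thesis
    unfolding commitment_valuable_def values_randomization_def by linarith
qed

lemma unit_cube_eq_cbox: "(unit_cube :: (real ^ 'n::finite) set) = cbox 0 1"
  unfolding unit_cube_def by (auto simp: mem_box_cart)

lemma emeasure_unit_cube: "emeasure lebesgue (unit_cube :: (real ^ 'n::finite) set) = 1"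
proof -
  have "emeasure lebesgue (cbox 0 (1 :: real ^ 'n)) = emeasure lborel (cbox 0 (1 :: real ^ 'n))"
    by (simp add: main_part_sets)
  also have "\<dots> = ennreal (Henstock_Kurzweil_Integration.content (cbox 0 (1 :: real ^ 'n)))"
    by (simp add: emeasure_lborel_cbox_eq content_cbox_if interval_eq_empty_cart Basis_vec_def inner_axis)
  also have "Henstock_Kurzweil_Integration.content (cbox 0 (1 :: real ^ 'n)) = 1"
    by (subst content_cbox_cart) (auto simp: interval_eq_empty_cart)
  finally show ?thesis
    by (simp add: unit_cube_eq_cbox)
qed

lemma unit_cube_diff_negligible:
  assumes "negligible N"
  shows "(unit_cube :: (real ^ 'n::finite) set) - N \<in> sets lebesgue"
    and "emeasure lebesgue ((unit_cube :: (real ^ 'n) set) - N) = 1"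
proof -
  have N: "N \<in> null_sets lebesgue"
    using assms negligible_iff_null_sets by blast
  have cube: "(unit_cube :: (real ^ 'n) set) \<in> sets lebesgue"
    by (simp add: unit_cube_eq_cbox)
  show "unit_cube - N \<in> sets lebesgue"
    using N cube by auto
  show "emeasure lebesgue (unit_cube - N) = 1"
    using emeasure_Diff_null_set[OF N cube] emeasure_unit_cube by simp
qed

lemma inj_off_hyperplanes:
  obtains K :: "(real ^ ('a::finite + 'b::finite)) set" where "finite K" "0 \<notin> K"
    "\<And>e. \<forall>c\<in>K. c \<bullet> e \<noteq> 0 \<Longrightarrow> inj (\<lambda>a. e $ Inl a)"
proof
  define c :: "'a \<times> 'a \<Rightarrow> real ^ ('a + 'b)" where "c = (\<lambda>(a, b). axis (Inl a) 1 - axis (Inl b) 1)"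
  define K where "K = range c - {0}"
  show "finite K" "0 \<notin> K"
    by (simp_all add: K_def)
  fix e :: "real ^ ('a + 'b)"
  assume off: "\<forall>c\<in>K. c \<bullet> e \<noteq> 0"
  show "inj (\<lambda>a. e $ Inl a)"
  proof (rule injI, rule ccontr)
    fix a b
    assume "e $ Inl a = e $ Inl b" "a \<noteq> b"
    then have "c (a, b) $ Inl a = 1"
      by (simp add: c_def axis_def)
    then have "c (a, b) \<in> K"
      by (auto simp: K_def)
    moreover have "c (a, b) \<bullet> e = e $ Inl a - e $ Inl b"
      by (simp add: c_def inner_diff_left inner_axis')
    ultimately show False
      using off \<open>e $ Inl a = e $ Inl b\<close> by simp
  qed
qed

lemma generic_receiver_off_hyperplanes:
  fixes mu :: "'w::finite \<Rightarrow> real"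
  assumes full: "\<forall>w. mu w > 0"
  obtains K :: "(real ^ ('a::finite + ('a \<times> 'w))) set" where "finite K" "0 \<notin> K"
    "\<And>e. \<forall>c\<in>K. c \<bullet> e \<noteq> 0 \<Longrightarrow> generic_receiver mu (env_uR e)"
proof
  define c :: "'w set \<times> 'a \<times> 'a \<Rightarrow> real ^ ('a + ('a \<times> 'w))" where
    "c = (\<lambda>(C, a, b). \<Sum>w\<in>C. mu w *\<^sub>R (axis (Inr (a, w)) 1 - axis (Inr (b, w)) 1))"
  define K where "K = range c - {0}"
  show "finite K" "0 \<notin> K"
    by (simp_all add: K_def)
  fix e :: "real ^ ('a + ('a \<times> 'w))"
  assume off: "\<forall>c\<in>K. c \<bullet> e \<noteq> 0"
  show "generic_receiver mu (env_uR e)"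
    unfolding generic_receiver_def env_uR_def
  proof (intro allI impI)
    fix C :: "'w set" and a b :: 'a
    assume "C \<noteq> {}" "a \<noteq> b"
    then obtain w0 where "w0 \<in> C"
      by blast
    have "c (C, a, b) $ Inr (a, w0) = (\<Sum>w\<in>C. mu w * (if w0 = w then 1 else 0))"
      using \<open>a \<noteq> b\<close> by (simp add: c_def axis_def sum_component)
    also have "\<dots> = mu w0"
      using \<open>w0 \<in> C\<close> by (simp add: if_distrib sum.delta cong: if_cong)
    finally have "c (C, a, b) \<in> K"
      using full[rule_format, of w0] by (auto simp: K_def)
    moreover have "c (C, a, b) \<bullet> e = (\<Sum>w\<in>C. mu w * (e $ Inr (a, w) - e $ Inr (b, w)))"
      by (simp add: c_def inner_sum_left inner_diff_left inner_axis' algebra_simps sum_subtractf)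
    ultimately show "(\<Sum>w\<in>C. mu w * (e $ Inr (a, w) - e $ Inr (b, w))) \<noteq> 0"
      using off by metis
  qed
qed

lemma generic_environments_full_measure:
  fixes mu :: "'w::finite \<Rightarrow> real"
  assumes full: "\<forall>w. mu w > 0"
  obtains E :: "(real ^ ('a::finite + ('a \<times> 'w))) set"
  where "E \<subseteq> unit_cube" "E \<in> sets lebesgue" "emeasure lebesgue E = 1"
    "\<And>e. e \<in> E \<Longrightarrow> inj (\<lambda>a. e $ Inl a) \<and> generic_receiver mu (env_uR e)"
proof -
  obtain K1 :: "(real ^ ('a + ('a \<times> 'w))) set" where K1: "finite K1" "0 \<notin> K1"
    and inj: "\<And>e. \<forall>c\<in>K1. c \<bullet> e \<noteq> 0 \<Longrightarrow> inj (\<lambda>a. e $ Inl a)"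
    using inj_off_hyperplanes by blast
  obtain K2 :: "(real ^ ('a + ('a \<times> 'w))) set" where K2: "finite K2" "0 \<notin> K2"
    and generic: "\<And>e. \<forall>c\<in>K2. c \<bullet> e \<noteq> 0 \<Longrightarrow> generic_receiver mu (env_uR e)"
    using generic_receiver_off_hyperplanes[OF full] by blast
  define E where "E = unit_cube - (\<Union>c\<in>K1 \<union> K2. {x. c \<bullet> x = 0})"
  have "negligible (\<Union>c\<in>K1 \<union> K2. {x :: real ^ ('a + ('a \<times> 'w)). c \<bullet> x = 0})"
    using K1 K2 by (auto intro!: negligible_hyperplane)
  note E_full = unit_cube_diff_negligible[OF this, folded E_def]
  show ?thesis
  proof (rule that[OF _ E_full])
    show "E \<subseteq> unit_cube"
      unfolding E_def by (rule Diff_subset)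
    show "inj (\<lambda>a. e $ Inl a) \<and> generic_receiver mu (env_uR e)" if "e \<in> E" for e
      using that inj generic by (simp add: E_def)
  qed
qed

theorem theorem4:
  fixes mu :: "'w::finite \<Rightarrow> real"
  assumes prior: "is_distr mu" and full_support: "\<forall>w. mu w > 0"
    and msgs: "CARD('m::finite) > max CARD('w) CARD('a::finite)"
  shows "\<exists>E \<subseteq> (unit_cube :: (real ^ ('a + ('a \<times> 'w))) set).
           E \<in> sets lebesgue \<and> emeasure lebesgue E = 1 \<and>
           (\<forall>e\<in>E. commitment_valuable mu (env_uS e) (env_uR e) TYPE('m)
                    \<longleftrightarrow> values_randomization mu (env_uS e) (env_uR e) TYPE('m))"
proof -
  obtain E :: "(real ^ ('a + ('a \<times> 'w))) set" where E: "E \<subseteq> unit_cube" "E \<in> sets lebesgue"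
    "emeasure lebesgue E = 1" and generic: "\<And>e. e \<in> E \<Longrightarrow> inj (\<lambda>a. e $ Inl a) \<and> generic_receiver mu (env_uR e)"
    using generic_environments_full_measure[OF full_support] by blast
  have "commitment_valuable mu (env_uS e) (env_uR e) TYPE('m)
      \<longleftrightarrow> values_randomization mu (env_uS e) (env_uR e) TYPE('m)" if "e \<in> E" for e
  proof -
    have "\<forall>a w. 0 \<le> env_uR e a w \<and> env_uR e a w \<le> 1"
      using that E(1) by (auto simp: unit_cube_def env_uR_def)
    with generic[OF that] have "commitment_valuable mu (\<lambda>a w. e $ Inl a) (env_uR e) TYPE('m)
        \<longleftrightarrow> values_randomization mu (\<lambda>a w. e $ Inl a) (env_uR e) TYPE('m)"
      using commitment_valuable_iff_values_randomization[OF prior full_support] by blast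
    moreover have "env_uS e = (\<lambda>a w. e $ Inl a)"
      by (simp add: env_uS_def fun_eq_iff)
    ultimately show ?thesis
      by simp
  qed
  with E show ?thesis
    by blast
qed

end
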